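(* Let $n\ge 2$ and let $v_1,\ldots,v_n$ be positive integers all less than or equal to $1.5n+1$. Then one of the following holds: $\mathrm{ML}(v_1,\ldots,v_n)<\frac{1}{n+1}$; or $\mathrm{ML}(v_1,\ldots,v_n)=\frac{s}{ns+1}$ for some integer $1\le s\le 3$; or $\mathrm{ML}(v_1,\ldots,v_n)\ge\frac1n$.
   Context: For a real number $x$, $\Vert x\Vert$ denotes the distance from $x$ to the nearest integer. For positive integers $v_1,\ldots,v_n$, the maximum loneliness is $\mathrm{ML}(v_1,\ldots,v_n)=\max_{t\in\mathbb{R}}\min_{1\le i\le n}\Vert t v_i\Vert$. *)

theory Defs
  imports Complex_Main
begin

definition dist_nearest_int :: "real \<Rightarrow> real" where
  "dist_nearest_int x = (INF k\<in>(UNIV::int set). \<bar>x - of_int k\<bar>)"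

definition max_loneliness :: "nat \<Rightarrow> (nat \<Rightarrow> nat) \<Rightarrow> real" where
  "max_loneliness n v = (SUP t\<in>(UNIV::real set). Min ((\<lambda>i. dist_nearest_int (t * real (v i))) ` {1..n}))"

end

theory Submission
  imports Defs "HOL-Analysis.Lipschitz"
begin

text \<open>
  The loneliness function \<open>t \<mapsto> min\<^sub>i \<parallel>t v\<^sub>i\<parallel>\<close> is Lipschitz and 1-periodic, so its
  supremum \<open>c\<close> is attained at some \<open>t\<^sub>0\<close>. If \<open>0 < c < 1/2\<close>, then at \<open>t\<^sub>0\<close> some runner sits
  exactly at fractional position \<open>1 - c\<close> (otherwise moving \<open>t\<close> slightly to the right would
  increase every \<open>\<parallel>t v\<^sub>i\<parallel>\<close>), and by the symmetry \<open>t \<mapsto> -t\<close> another one sits exactly at \<open>c\<close>.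
  Their speeds \<open>v\<^sub>i \<noteq> v\<^sub>j\<close> then satisfy \<open>t\<^sub>0 (v\<^sub>i + v\<^sub>j) \<in> \<int>\<close>, so \<open>c\<close> is a fraction with
  denominator \<open>v\<^sub>i + v\<^sub>j \<le> 3n + 1\<close>. The only such fractions in \<open>[1/(n+1), 1/n)\<close> are
  \<open>s/(ns+1)\<close> with \<open>s \<le> 3\<close>.
\<close>

lemma dist_nearest_int_eq_min_frac: "dist_nearest_int x = min (frac x) (1 - frac x)"
proof -
  let ?X = "(\<lambda>k. \<bar>x - of_int k\<bar>) ` (UNIV::int set)"
  have floor_dist: "\<bar>x - of_int \<lfloor>x\<rfloor>\<bar> = frac x"
    by (simp add: frac_def)
  have ceiling_dist: "\<bar>x - of_int (\<lfloor>x\<rfloor> + 1)\<bar> = 1 - frac x"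
    using frac_lt_1[of x] by (simp add: frac_def)
  have attained: "min (frac x) (1 - frac x) \<in> ?X"
    using floor_dist ceiling_dist by (metis min_def rangeI)
  have lower_bound: "\<forall>y\<in>?X. min (frac x) (1 - frac x) \<le> y"
  proof
    fix y assume "y \<in> ?X"
    then obtain k where k: "y = \<bar>x - of_int k\<bar>" by auto
    show "min (frac x) (1 - frac x) \<le> y"
    proof (cases "k \<le> \<lfloor>x\<rfloor>")
      case True
      then have "real_of_int k \<le> of_int \<lfloor>x\<rfloor>" by linarith
      then show ?thesis using k of_int_floor_le[of x] by (simp add: frac_def)
    next
      case False
      then have "real_of_int k \<ge> of_int \<lfloor>x\<rfloor> + 1" by linarith
      then show ?thesis using k of_int_floor_le[of x] by (simp add: frac_def)
    qed
  qed
  show ?thesis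
    unfolding dist_nearest_int_def using cInf_eq_minimum[OF attained] lower_bound by blast
qed

lemma dist_nearest_int_add_of_int: "dist_nearest_int (x + of_int m) = dist_nearest_int x"
  by (simp add: dist_nearest_int_eq_min_frac frac_def)

lemma dist_nearest_int_minus: "dist_nearest_int (- x) = dist_nearest_int x"
  by (cases "x \<in> \<int>") (auto simp: dist_nearest_int_eq_min_frac frac_neg min.commute elim: Ints_cases)

lemma dist_nearest_int_le_add_abs_diff:
  "dist_nearest_int x \<le> dist_nearest_int y + \<bar>x - y\<bar>"
proof -
  define m where "m = (if frac y \<le> 1 - frac y then \<lfloor>y\<rfloor> else \<lfloor>y\<rfloor> + 1)"
  have m: "dist_nearest_int y = \<bar>y - of_int m\<bar>"
    using frac_lt_1[of y] by (auto simp: m_def dist_nearest_int_eq_min_frac frac_def)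
  have "bdd_below ((\<lambda>k. \<bar>x - of_int k\<bar>) ` (UNIV::int set))"
    by (rule bdd_belowI[of _ 0]) auto
  then have "dist_nearest_int x \<le> \<bar>x - of_int m\<bar>"
    unfolding dist_nearest_int_def by (rule cInf_lower[rotated]) auto
  then show ?thesis using m by linarith
qed

definition loneliness_at :: "nat \<Rightarrow> (nat \<Rightarrow> nat) \<Rightarrow> real \<Rightarrow> real" where
  "loneliness_at n v t = Min ((\<lambda>i. dist_nearest_int (t * real (v i))) ` {1..n})"

lemma max_loneliness_eq_SUP_loneliness_at:
  "max_loneliness n v = (SUP t. loneliness_at n v t)"
  by (simp add: max_loneliness_def loneliness_at_def)

lemma loneliness_at_le:
  "i \<in> {1..n} \<Longrightarrow> loneliness_at n v t \<le> dist_nearest_int (t * real (v i))"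
  unfolding loneliness_at_def by (rule Min_le) auto

lemma loneliness_at_attained:
  assumes "n \<ge> 1"
  obtains i where "i \<in> {1..n}" "loneliness_at n v t = dist_nearest_int (t * real (v i))"
proof -
  have "loneliness_at n v t \<in> (\<lambda>i. dist_nearest_int (t * real (v i))) ` {1..n}"
    unfolding loneliness_at_def using assms by (intro Min_in) auto
  then show ?thesis using that by blast
qed

lemma loneliness_at_minus: "loneliness_at n v (- t) = loneliness_at n v t"
proof -
  have "dist_nearest_int (- t * real (v i)) = dist_nearest_int (t * real (v i))" for i
    using dist_nearest_int_minus[of "t * real (v i)"] by simp
  then show ?thesis unfolding loneliness_at_def by simp
qed

lemma loneliness_at_frac: "loneliness_at n v (frac t) = loneliness_at n v t"
proof -
  have "dist_nearest_int (frac t * real (v i)) = dist_nearest_int (t * real (v i))" for i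
  proof -
    have "t * real (v i) = frac t * real (v i) + of_int (\<lfloor>t\<rfloor> * int (v i))"
      by (simp add: frac_def algebra_simps)
    then show ?thesis by (metis dist_nearest_int_add_of_int)
  qed
  then show ?thesis unfolding loneliness_at_def by simp
qed

lemma loneliness_at_lipschitz:
  assumes "n \<ge> 1"
  shows "lipschitz_on (real (Max (v ` {1..n}))) UNIV (loneliness_at n v)"
proof -
  let ?V = "real (Max (v ` {1..n}))"
  have le: "loneliness_at n v t \<le> loneliness_at n v s + ?V * \<bar>t - s\<bar>" for s t
  proof -
    obtain j where j: "j \<in> {1..n}" "loneliness_at n v s = dist_nearest_int (s * real (v j))"
      using loneliness_at_attained[OF assms] by blast
    have "loneliness_at n v t \<le> dist_nearest_int (t * real (v j))"
      using j(1) by (rule loneliness_at_le)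
    also have "\<dots> \<le> dist_nearest_int (s * real (v j)) + \<bar>t * real (v j) - s * real (v j)\<bar>"
      by (rule dist_nearest_int_le_add_abs_diff)
    also have "\<bar>t * real (v j) - s * real (v j)\<bar> = real (v j) * \<bar>t - s\<bar>"
      by (simp add: abs_mult left_diff_distrib[symmetric])
    also have "real (v j) * \<bar>t - s\<bar> \<le> ?V * \<bar>t - s\<bar>"
      using j(1) by (intro mult_right_mono) auto
    finally show ?thesis using j(2) by simp
  qed
  show ?thesis
  proof (rule lipschitz_onI)
    fix s t :: real
    show "dist (loneliness_at n v t) (loneliness_at n v s) \<le> ?V * dist t s"
      unfolding dist_real_def
    proof (rule abs_leI)
      show "loneliness_at n v t - loneliness_at n v s \<le> ?V * \<bar>t - s\<bar>"
        using le[of t s] by linarith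
      show "- (loneliness_at n v t - loneliness_at n v s) \<le> ?V * \<bar>t - s\<bar>"
        using le[of s t, unfolded abs_minus_commute[of s t]] by linarith
    qed
  qed simp
qed

lemma max_loneliness_attained:
  assumes "n \<ge> 1"
  obtains t0 where "\<And>t. loneliness_at n v t \<le> loneliness_at n v t0"
    and "max_loneliness n v = loneliness_at n v t0"
proof -
  have cont: "continuous_on {0..1} (loneliness_at n v)"
    using lipschitz_on_continuous_on[OF loneliness_at_lipschitz[OF assms]]
    by (rule continuous_on_subset) simp
  obtain t0 where t0: "\<forall>t\<in>{0..1}. loneliness_at n v t \<le> loneliness_at n v t0"
    using continuous_attains_sup[OF compact_Icc _ cont] by auto
  have max: "loneliness_at n v t \<le> loneliness_at n v t0" for t
  proof -
    have "frac t \<in> {0..1}"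
      using frac_ge_0[of t] frac_lt_1[of t] by simp
    then show ?thesis using t0 loneliness_at_frac[of n v t] by metis
  qed
  then have "max_loneliness n v = loneliness_at n v t0"
    unfolding max_loneliness_eq_SUP_loneliness_at by (intro cSup_eq_maximum) auto
  with max show ?thesis using that by blast
qed

lemma loneliness_max_frac_eq_one_minus:
  assumes "n \<ge> 1" and pos: "\<And>i. i \<in> {1..n} \<Longrightarrow> v i > 0"
    and max: "\<And>t. loneliness_at n v t \<le> loneliness_at n v t0"
    and c_pos: "0 < loneliness_at n v t0"
  shows "\<exists>i\<in>{1..n}. frac (t0 * real (v i)) = 1 - loneliness_at n v t0"
proof (rule ccontr)
  define c where "c = loneliness_at n v t0"
  define f where "f i = frac (t0 * real (v i))" for i
  assume no_runner: "\<not> ?thesis"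
  have f_range: "c \<le> f i \<and> f i < 1 - c" if "i \<in> {1..n}" for i
  proof -
    have "c \<le> min (f i) (1 - f i)"
      using loneliness_at_le[OF that] by (simp add: c_def f_def dist_nearest_int_eq_min_frac)
    moreover have "f i \<noteq> 1 - c"
      using no_runner that by (auto simp: c_def f_def)
    ultimately show ?thesis by auto
  qed
  define h where "h = Min ((\<lambda>i. (1 - c - f i) / (real (v i) + 1)) ` {1..n})"
  have "h > 0"
    unfolding h_def using \<open>n \<ge> 1\<close> f_range by (subst Min_gr_iff) auto
  have "dist_nearest_int ((t0 + h) * real (v i)) > c" if i: "i \<in> {1..n}" for i
  proof -
    have "h \<le> (1 - c - f i) / (real (v i) + 1)"
      unfolding h_def using i by (intro Min_le) auto
    then have "h * (real (v i) + 1) \<le> 1 - c - f i"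
      by (simp add: pos_le_divide_eq)
    then have "h * real (v i) < 1 - c - f i"
      using \<open>h > 0\<close> by (simp add: algebra_simps)
    moreover have "h * real (v i) > 0"
      using \<open>h > 0\<close> pos[OF i] by simp
    ultimately have y: "c < f i + h * real (v i)" "f i + h * real (v i) < 1 - c"
      using f_range[OF i] by auto
    have "(t0 + h) * real (v i) = (f i + h * real (v i)) + of_int \<lfloor>t0 * real (v i)\<rfloor>"
      by (simp add: f_def frac_def algebra_simps)
    then have "dist_nearest_int ((t0 + h) * real (v i)) = dist_nearest_int (f i + h * real (v i))"
      by (metis dist_nearest_int_add_of_int)
    also have "\<dots> = min (f i + h * real (v i)) (1 - (f i + h * real (v i)))"
      using y c_pos by (simp add: c_def dist_nearest_int_eq_min_frac frac_eq)
    finally show ?thesis using y by simp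
  qed
  then have "loneliness_at n v (t0 + h) > c"
    unfolding loneliness_at_def using \<open>n \<ge> 1\<close> by (subst Min_gr_iff) auto
  then show False using max[of "t0 + h"] by (simp add: c_def)
qed

lemma loneliness_max_denominator:
  assumes "n \<ge> 1" and "\<And>i. i \<in> {1..n} \<Longrightarrow> v i > 0"
    and "\<And>t. loneliness_at n v t \<le> loneliness_at n v t0"
    and "0 < loneliness_at n v t0" and c_lt_half: "loneliness_at n v t0 < 1/2"
  shows "\<exists>i\<in>{1..n}. \<exists>j\<in>{1..n}. v i \<noteq> v j \<and> loneliness_at n v t0 * real (v i + v j) \<in> \<int>"
proof -
  define c where "c = loneliness_at n v t0"
  obtain i where i: "i \<in> {1..n}" "frac (t0 * real (v i)) = 1 - c"
    using loneliness_max_frac_eq_one_minus[OF assms(1-4)] by (auto simp: c_def)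
  have "\<exists>j\<in>{1..n}. frac (- t0 * real (v j)) = 1 - c"
    using loneliness_max_frac_eq_one_minus[of n v "- t0"] assms(1-4)
    by (simp add: c_def loneliness_at_minus)
  then obtain j where j: "j \<in> {1..n}" "frac (- (t0 * real (v j))) = 1 - c"
    by auto
  have "t0 * real (v j) \<notin> \<int>"
    using j(2) c_lt_half by (auto simp: frac_neg c_def)
  then have frac_j: "frac (t0 * real (v j)) = c"
    using j(2) by (simp add: frac_neg)
  have "v i \<noteq> v j"
    using i(2) frac_j c_lt_half by (auto simp: c_def)
  have t0_sum: "t0 * real (v i + v j) \<in> \<int>"
  proof -
    have "t0 * real (v i + v j) = of_int (\<lfloor>t0 * real (v i)\<rfloor> + \<lfloor>t0 * real (v j)\<rfloor> + 1)"
      using i(2) frac_j by (simp add: frac_def algebra_simps)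
    then show ?thesis by simp
  qed
  have c_eq: "c = t0 * real (v j) - of_int \<lfloor>t0 * real (v j)\<rfloor>"
    using frac_j by (simp add: frac_def)
  have "c * real (v i + v j)
      = real (v j) * (t0 * real (v i + v j)) - of_int \<lfloor>t0 * real (v j)\<rfloor> * real (v i + v j)"
    unfolding c_eq by (simp add: algebra_simps)
  also have "\<dots> \<in> \<int>"
    by (rule Ints_diff[OF Ints_mult[OF Ints_of_nat t0_sum] Ints_mult[OF Ints_of_int Ints_of_nat]])
  finally have "v i \<noteq> v j \<and> loneliness_at n v t0 * real (v i + v j) \<in> \<int>"
    using \<open>v i \<noteq> v j\<close> by (simp add: c_def)
  then show ?thesis using i(1) j(1) by blast
qed

lemma fraction_between_reciprocals:
  fixes n d :: nat and c :: real
  assumes "n \<ge> 1" and "1 \<le> d" and "d \<le> 3 * n + 1" and "c * real d \<in> \<int>"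
    and "1 / (real n + 1) \<le> c" and "c < 1 / real n"
  shows "\<exists>s::nat. 1 \<le> s \<and> s \<le> 3 \<and> c = real s / (real n * real s + 1)"
proof -
  obtain K where K: "c * real d = of_int K"
    using \<open>c * real d \<in> \<int>\<close> by (auto elim: Ints_cases)
  have "1 \<le> c * (real n + 1)" "c * real n < 1"
    using assms by (simp_all add: field_simps)
  then have "real d * 1 \<le> real d * (c * (real n + 1))" "c * real n * real d < 1 * real d"
    using \<open>1 \<le> d\<close> by (intro mult_left_mono mult_strict_right_mono; simp)+
  then have "real_of_int (int d) \<le> of_int (K * (int n + 1))" "of_int (K * int n) < real_of_int (int d)"
    by (simp_all add: K[symmetric] algebra_simps)
  then have lower: "int d \<le> K * (int n + 1)" and upper: "K * int n < int d"
    by (simp_all only: of_int_le_iff of_int_less_iff)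
  have "K > 0"
  proof (rule ccontr)
    assume "\<not> K > 0"
    then have "K * (int n + 1) \<le> 0" by (simp add: mult_nonpos_nonneg)
    then show False using lower \<open>1 \<le> d\<close> by simp
  qed
  moreover have "K < 4"
  proof (rule ccontr)
    assume "\<not> K < 4"
    then have "4 * int n \<le> K * int n" by (simp add: mult_right_mono)
    then show False using upper \<open>d \<le> 3 * n + 1\<close> \<open>n \<ge> 1\<close> by linarith
  qed
  ultimately have "K = 1 \<or> K = 2 \<or> K = 3" by auto
  then have "K = 1 \<and> d = n + 1 \<or> K = 2 \<and> d = 2 * n + 1 \<or> K = 2 \<and> d = 2 * n + 2
      \<or> K = 3 \<and> d = 3 * n + 1"
    using lower upper \<open>d \<le> 3 * n + 1\<close> by (elim disjE; simp; presburger)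
  then consider "K = 1" "d = n + 1" | "K = 2" "d = 2 * n + 1" | "K = 2" "d = 2 * n + 2"
    | "K = 3" "d = 3 * n + 1"
    by blast
  then show ?thesis
  proof cases
    case 1
    then show ?thesis using K by (intro exI[of _ 1]) (simp add: eq_divide_eq algebra_simps)
  next
    case 2
    then show ?thesis using K by (intro exI[of _ 2]) (simp add: eq_divide_eq algebra_simps)
  next
    case 3
    then show ?thesis using K by (intro exI[of _ 1]) (simp add: eq_divide_eq algebra_simps)
  next
    case 4
    then show ?thesis using K by (intro exI[of _ 3]) (simp add: eq_divide_eq algebra_simps)
  qed
qed

theorem proposition11p3:
  fixes n :: nat and v :: "nat \<Rightarrow> nat"
  assumes "n \<ge> 2"
    and "\<And>i. i \<in> {1..n} \<Longrightarrow> v i > 0"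
    and "\<And>i. i \<in> {1..n} \<Longrightarrow> real (v i) \<le> 1.5 * real n + 1"
  shows "max_loneliness n v < 1 / (real n + 1)
    \<or> (\<exists>s::nat. 1 \<le> s \<and> s \<le> 3 \<and> max_loneliness n v = real s / (real n * real s + 1))
    \<or> max_loneliness n v \<ge> 1 / real n"
proof -
  have "n \<ge> 1" using assms(1) by simp
  then obtain t0 where max: "\<And>t. loneliness_at n v t \<le> loneliness_at n v t0"
    and sup_eq: "max_loneliness n v = loneliness_at n v t0"
    using max_loneliness_attained[of n v] by blast
  consider "max_loneliness n v < 1 / (real n + 1)" | "max_loneliness n v \<ge> 1 / real n"
    | "1 / (real n + 1) \<le> max_loneliness n v" "max_loneliness n v < 1 / real n"
    by linarith
  then show ?thesis
  proof cases
    case 3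
    have "0 < 1 / (real n + 1)" "1 / real n \<le> 1/2"
      using assms(1) by (simp_all add: field_simps)
    then have "0 < loneliness_at n v t0" "loneliness_at n v t0 < 1/2"
      using 3 sup_eq by linarith+
    then obtain i j where ij: "i \<in> {1..n}" "j \<in> {1..n}" "v i \<noteq> v j"
      and "loneliness_at n v t0 * real (v i + v j) \<in> \<int>"
      using loneliness_max_denominator[OF \<open>n \<ge> 1\<close> assms(2) max] by blast
    moreover have "2 * v i \<le> 3 * n + 2" "2 * v j \<le> 3 * n + 2" "v i > 0"
      using assms(2,3)[OF ij(1)] assms(3)[OF ij(2)] by linarith+
    ultimately have "\<exists>s::nat. 1 \<le> s \<and> s \<le> 3 \<and> max_loneliness n v = real s / (real n * real s + 1)"
      using 3 sup_eq by (intro fraction_between_reciprocals[OF \<open>n \<ge> 1\<close>, of "v i + v j"]) auto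
    then show ?thesis by blast
  qed auto
qed

end
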